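(* Let $P$ be an Eulerian poset of rank $d\ge 3$ with $f$-vector $(f_{-1},\dots,f_d)$. Then $\mathcal{M}_P(z)=\sum_{-1\le i\le j\le d}N_{i,j}(-z)^{j-i}$, and all $N_{i,j}$ are determined by the $f$-vector together with the values $N_{i,j}$ for $0\le i$, $i+2\le j\le d-2$, as follows: $N_{r,r}=N_{-1,r}=N_{r,d}=f_r$ for $-1\le r\le d$; $N_{0,1}=2f_1$; for $1\le i\le d-3$, $$N_{i,i+1}=\bigl((-1)^i+1\bigr)f_{i+1}+\sum_{k=0}^{i-1}(-1)^{i+1-k}N_{k,i+1};$$ $N_{d-2,d-1}=2f_{d-2}$; and for $0\le i\le d-3$, $$N_{i,d-1}=\bigl((-1)^{d-i}+1\bigr)f_i+\sum_{j=i+1}^{d-2}(-1)^{d-j}N_{i,j}.$$ In particular, $\mathcal{M}_P(z)$ is determined by the $f$-vector and the numbers $N_{i,j}$ with $0<i+1<j<d-1$.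
   Context: A ranked poset is a finite poset with a rank function $|\cdot|$ such that covering relations increase rank by one and minimal elements have rank $-1$; $f_r$ is the number of elements of rank $r$. The Möbius function is $\mu[p,p]=1$, $\mu[p,q]=-\sum_{p\le s<q}\mu[p,s]$ for $p<q$, $0$ if $p\not\le q$. An Eulerian poset is a ranked poset with unique minimum and maximum elements such that $\mu[p,q]=(-1)^{|q|-|p|}$ for all $p\le q$. For $-1\le i\le j\le d$, $N_{i,j}$ is the number of pairs $(p,q)$ with $p\le q$, $|p|=i$, $|q|=j$. The Möbius polynomial is $\mathcal{M}_P(z)=\sum_{p\le q\in P}\mu[p,q]z^{|q|-|p|}$. *)

theory Defs
  imports "HOL-Computational_Algebra.Polynomial"
begin

definition poset_on :: "'a set \<Rightarrow> ('a \<Rightarrow> 'a \<Rightarrow> bool) \<Rightarrow> bool" where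
  "poset_on P le \<longleftrightarrow> finite P \<and> (\<forall>p\<in>P. le p p)
     \<and> (\<forall>p\<in>P. \<forall>q\<in>P. le p q \<and> le q p \<longrightarrow> p = q)
     \<and> (\<forall>p\<in>P. \<forall>q\<in>P. \<forall>s\<in>P. le p q \<and> le q s \<longrightarrow> le p s)"

definition covers :: "'a set \<Rightarrow> ('a \<Rightarrow> 'a \<Rightarrow> bool) \<Rightarrow> 'a \<Rightarrow> 'a \<Rightarrow> bool" where
  "covers P le p q \<longleftrightarrow> le p q \<and> p \<noteq> q \<and> \<not> (\<exists>s\<in>P. le p s \<and> le s q \<and> s \<noteq> p \<and> s \<noteq> q)"

definition ranked_poset :: "'a set \<Rightarrow> ('a \<Rightarrow> 'a \<Rightarrow> bool) \<Rightarrow> ('a \<Rightarrow> int) \<Rightarrow> bool" where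
  "ranked_poset P le rk \<longleftrightarrow> poset_on P le
     \<and> (\<forall>p\<in>P. \<forall>q\<in>P. covers P le p q \<longrightarrow> rk q = rk p + 1)
     \<and> (\<forall>p\<in>P. (\<forall>q\<in>P. le q p \<longrightarrow> q = p) \<longrightarrow> rk p = -1)"

definition mobius :: "'a set \<Rightarrow> ('a \<Rightarrow> 'a \<Rightarrow> bool) \<Rightarrow> 'a \<Rightarrow> 'a \<Rightarrow> int" where
  "mobius P le = (THE m. (\<forall>p q. (p \<notin> P \<or> q \<notin> P) \<longrightarrow> m p q = 0) \<and>
      (\<forall>p\<in>P. \<forall>q\<in>P. m p q =
         (if p = q then 1
          else if le p q then - (\<Sum>s\<in>{s\<in>P. le p s \<and> le s q \<and> s \<noteq> q}. m p s)
          else 0)))"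

definition eulerian :: "'a set \<Rightarrow> ('a \<Rightarrow> 'a \<Rightarrow> bool) \<Rightarrow> ('a \<Rightarrow> int) \<Rightarrow> bool" where
  "eulerian P le rk \<longleftrightarrow> ranked_poset P le rk
     \<and> (\<exists>b\<in>P. \<forall>p\<in>P. le b p) \<and> (\<exists>t\<in>P. \<forall>p\<in>P. le p t)
     \<and> (\<forall>p\<in>P. \<forall>q\<in>P. le p q \<longrightarrow> mobius P le p q = (-1) ^ nat (rk q - rk p))"

definition fvec :: "'a set \<Rightarrow> ('a \<Rightarrow> int) \<Rightarrow> int \<Rightarrow> nat" where
  "fvec P rk r = card {p\<in>P. rk p = r}"

definition Npairs :: "'a set \<Rightarrow> ('a \<Rightarrow> 'a \<Rightarrow> bool) \<Rightarrow> ('a \<Rightarrow> int) \<Rightarrow> int \<Rightarrow> int \<Rightarrow> nat" where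
  "Npairs P le rk i j = card {(p, q). p \<in> P \<and> q \<in> P \<and> le p q \<and> rk p = i \<and> rk q = j}"

definition mobius_poly :: "'a set \<Rightarrow> ('a \<Rightarrow> 'a \<Rightarrow> bool) \<Rightarrow> ('a \<Rightarrow> int) \<Rightarrow> int poly" where
  "mobius_poly P le rk =
     (\<Sum>(p, q)\<in>{(p, q). p \<in> P \<and> q \<in> P \<and> le p q}. monom (mobius P le p q) (nat (rk q - rk p)))"

end

theory Submission
  imports Defs
begin

(* In an Eulerian poset every proper interval [p, q] satisfies the Euler relation
   sum_{p <= s <= q} (-1)^(|s| - |p|) = 0, which is the recursion of the Moebius function
   for mu[p, s] = (-1)^(|s| - |p|). Summing it over the intervals [0^, q] with |q| = m and
   [p, 1^] with |p| = i gives the linear relations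
   sum_k (-1)^(k+1) N_{k,m} = 0  and  sum_k (-1)^(d-k) N_{i,k} = 0,
   and since 0^ and 1^ are the only elements of ranks -1 and d, N_{r,r} = N_{-1,r} = N_{r,d} = f_r.
   Solving the first relation for N_{i,i+1} and the second for N_{i,d-1} gives the formulas,
   and grouping the pairs p <= q of M_P by their ranks gives its expansion in the N_{i,j}.
   Consequently the entries N_{i,i+1} are determined successively from interior entries,
   then the entries N_{i,d-1}, and with them the whole polynomial. *)

definition interval :: "'a set \<Rightarrow> ('a \<Rightarrow> 'a \<Rightarrow> bool) \<Rightarrow> 'a \<Rightarrow> 'a \<Rightarrow> 'a set" where
  "interval P le p q = {s\<in>P. le p s \<and> le s q}"

lemma card_interval_shrink_top:
  assumes po: "poset_on P le" and "p \<in> P" "q \<in> P" "s \<in> P" "le p s" "le s q" "s \<noteq> q"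
  shows "card (interval P le p s) < card (interval P le p q)"
proof (rule psubset_card_mono)
  show "finite (interval P le p q)" using po by (simp add: poset_on_def interval_def)
  show "interval P le p s \<subset> interval P le p q"
    using assms unfolding poset_on_def interval_def by blast
qed

lemma card_interval_shrink_bot:
  assumes po: "poset_on P le" and "p \<in> P" "q \<in> P" "s \<in> P" "le p s" "le s q" "s \<noteq> p"
  shows "card (interval P le s q) < card (interval P le p q)"
proof (rule psubset_card_mono)
  show "finite (interval P le p q)" using po by (simp add: poset_on_def interval_def)
  show "interval P le s q \<subset> interval P le p q"
    using assms unfolding poset_on_def interval_def by blast
qed

(* mobius is defined by THE, so its recursion is available only once a solution is exhibited. *)
function mobius_fun :: "'a set \<Rightarrow> ('a \<Rightarrow> 'a \<Rightarrow> bool) \<Rightarrow> 'a \<Rightarrow> 'a \<Rightarrow> int" where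
  "mobius_fun P le p q =
     (if p \<notin> P \<or> q \<notin> P then 0
      else if p = q then 1
      else if le p q \<and> poset_on P le
      then - (\<Sum>s\<in>{s\<in>P. le p s \<and> le s q \<and> s \<noteq> q}. mobius_fun P le p s)
      else 0)"
  by pat_completeness auto
termination
  by (relation "measure (\<lambda>(P, le, p, q). card (interval P le p q))")
     (auto intro: card_interval_shrink_top)

declare mobius_fun.simps [simp del]

lemma mobius_fun_unique:
  assumes "poset_on P le"
    and "\<forall>p q. p \<notin> P \<or> q \<notin> P \<longrightarrow> m p q = 0"
    and "\<forall>p\<in>P. \<forall>q\<in>P. m p q =
           (if p = q then 1
            else if le p q then - (\<Sum>s\<in>{s\<in>P. le p s \<and> le s q \<and> s \<noteq> q}. m p s)
            else 0)"
  shows "m p q = mobius_fun P le p q"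
  using assms
proof (induction P le p q rule: mobius_fun.induct)
  case (1 P le p q)
  then show ?case
    by (subst mobius_fun.simps) (auto intro!: sum.cong)
qed

lemma mobius_eq_mobius_fun:
  assumes "poset_on P le"
  shows "mobius P le = mobius_fun P le"
  unfolding mobius_def
proof (rule the_equality, goal_cases)
  case 1
  show ?case using assms by (intro conjI allI ballI impI; subst mobius_fun.simps; simp)
next
  case (2 m)
  then show ?case using mobius_fun_unique[OF assms] by blast
qed

lemma mobius_rec:
  assumes "poset_on P le" and "p \<in> P" "q \<in> P" "le p q" "p \<noteq> q"
  shows "mobius P le p q = - (\<Sum>s\<in>{s\<in>P. le p s \<and> le s q \<and> s \<noteq> q}. mobius P le p s)"
  using assms by (simp add: mobius_eq_mobius_fun) (subst mobius_fun.simps, simp)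

lemma ranked_poset_rank_less:
  assumes rp: "ranked_poset P le rk" and "p \<in> P" "q \<in> P" "le p q" "p \<noteq> q"
  shows "rk p < rk q"
  using assms(2-)
proof (induction "card (interval P le p q)" arbitrary: p q rule: less_induct)
  case less
  have po: "poset_on P le" using rp by (simp add: ranked_poset_def)
  show ?case
  proof (cases "covers P le p q")
    case True
    then show ?thesis using rp less.prems by (simp add: ranked_poset_def)
  next
    case False
    then obtain s where s: "s \<in> P" "le p s" "le s q" "s \<noteq> p" "s \<noteq> q"
      using less.prems unfolding covers_def by blast
    have "rk p < rk s"
      using less.hyps[of p s] card_interval_shrink_top[OF po] less.prems s by blast
    moreover have "rk s < rk q"
      using less.hyps[of s q] card_interval_shrink_bot[OF po] less.prems s by blast
    ultimately show ?thesis by simp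
  qed
qed

lemma sum_comp_fibres:
  assumes "finite A" "finite K" "h ` A \<subseteq> K"
  shows "(\<Sum>x\<in>A. c (h x)) = (\<Sum>k\<in>K. c k * int (card {x\<in>A. h x = k}))"
proof -
  have "(\<Sum>x\<in>A. c (h x)) = (\<Sum>k\<in>K. \<Sum>x\<in>{x\<in>A. h x = k}. c (h x))"
    by (rule sum.group[symmetric]) (use assms in auto)
  also have "\<dots> = (\<Sum>k\<in>K. c k * int (card {x\<in>A. h x = k}))"
    by (intro sum.cong refl) (simp add: mult.commute)
  finally show ?thesis .
qed

definition minus_one_pow :: "int \<Rightarrow> int" where
  "minus_one_pow k = (if even k then 1 else -1)"

lemma minus_one_pow_add: "minus_one_pow (a + b) = minus_one_pow a * minus_one_pow b"
  by (auto simp: minus_one_pow_def)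

lemma minus_one_pow_small [simp]:
  "minus_one_pow (-1) = -1" "minus_one_pow 0 = 1" "minus_one_pow 1 = -1" "minus_one_pow 2 = 1"
  by (simp_all add: minus_one_pow_def)

lemma power_minus_one_nat: "0 \<le> k \<Longrightarrow> (-1::int) ^ nat k = minus_one_pow k"
  by (simp add: minus_one_pow_def minus_one_power_iff even_nat_iff)

lemma monom_power_minus_X: "[:0, -1 :: 'a :: comm_ring_1:] ^ n = monom ((-1) ^ n) n"
proof -
  have "[:0, -1 :: 'a:] = monom (-1) 1"
    by (simp add: monom_Suc monom_0)
  then show ?thesis
    by (simp add: monom_power)
qed

locale eulerian_poset =
  fixes P :: "'a set" and le :: "'a \<Rightarrow> 'a \<Rightarrow> bool" and rk :: "'a \<Rightarrow> int" and d :: int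
  assumes eulerian: "eulerian P le rk"
    and rank_attained: "d \<in> rk ` P"
    and rank_bounded: "\<forall>p\<in>P. rk p \<le> d"
begin

lemma ranked: "ranked_poset P le rk"
  using eulerian by (simp add: eulerian_def)

lemma poset: "poset_on P le"
  using ranked by (simp add: ranked_poset_def)

lemma finite_carrier: "finite P"
  using poset by (simp add: poset_on_def)

lemma refl_le: "p \<in> P \<Longrightarrow> le p p"
  using poset by (simp add: poset_on_def)

lemma mobius_eulerian: "p \<in> P \<Longrightarrow> q \<in> P \<Longrightarrow> le p q \<Longrightarrow> mobius P le p q = (-1) ^ nat (rk q - rk p)"
  using eulerian by (simp add: eulerian_def)

lemma rank_less: "p \<in> P \<Longrightarrow> q \<in> P \<Longrightarrow> le p q \<Longrightarrow> p \<noteq> q \<Longrightarrow> rk p < rk q"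
  using ranked_poset_rank_less[OF ranked] .

lemma rank_mono: "p \<in> P \<Longrightarrow> q \<in> P \<Longrightarrow> le p q \<Longrightarrow> rk p \<le> rk q"
  using rank_less by (cases "p = q") force+

definition hat0 :: 'a where "hat0 = (SOME b. b \<in> P \<and> (\<forall>p\<in>P. le b p))"
definition hat1 :: 'a where "hat1 = (SOME t. t \<in> P \<and> (\<forall>p\<in>P. le p t))"

lemma hat0: "hat0 \<in> P" "p \<in> P \<Longrightarrow> le hat0 p"
proof -
  have "\<exists>b. b \<in> P \<and> (\<forall>p\<in>P. le b p)" using eulerian by (auto simp: eulerian_def)
  then have "hat0 \<in> P \<and> (\<forall>p\<in>P. le hat0 p)" unfolding hat0_def by (rule someI_ex)
  then show "hat0 \<in> P" "p \<in> P \<Longrightarrow> le hat0 p" by blast+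
qed

lemma hat1: "hat1 \<in> P" "p \<in> P \<Longrightarrow> le p hat1"
proof -
  have "\<exists>t. t \<in> P \<and> (\<forall>p\<in>P. le p t)" using eulerian by (auto simp: eulerian_def)
  then have "hat1 \<in> P \<and> (\<forall>p\<in>P. le p hat1)" unfolding hat1_def by (rule someI_ex)
  then show "hat1 \<in> P" "p \<in> P \<Longrightarrow> le p hat1" by blast+
qed

lemma rank_hat0: "rk hat0 = -1"
proof -
  have "q = hat0" if "q \<in> P" "le q hat0" for q
    using poset that hat0 unfolding poset_on_def by blast
  then show ?thesis using ranked hat0(1) unfolding ranked_poset_def by blast
qed

lemma rank_hat1: "rk hat1 = d"
proof -
  obtain p where "p \<in> P" "rk p = d" using rank_attained by auto
  then show ?thesis using rank_mono[of p hat1] hat1 rank_bounded by force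
qed

lemma rank_range: "p \<in> P \<Longrightarrow> -1 \<le> rk p \<and> rk p \<le> d"
  using rank_mono[of hat0 p] hat0 rank_hat0 rank_bounded by auto

lemma finite_interval: "finite (interval P le p q)"
  using finite_carrier by (simp add: interval_def)

lemma eulerian_interval_sum:
  assumes "p \<in> P" "q \<in> P" "le p q" "p \<noteq> q"
  shows "(\<Sum>s\<in>interval P le p q. minus_one_pow (rk s - rk p)) = 0"
proof -
  let ?sign = "\<lambda>s. minus_one_pow (rk s - rk p)"
  have below_q: "{s\<in>P. le p s \<and> le s q \<and> s \<noteq> q} = interval P le p q - {q}"
    by (auto simp: interval_def)
  have mobius_sign: "mobius P le p s = ?sign s" if "s \<in> P" "le p s" for s
    using that assms rank_mono by (simp add: mobius_eulerian power_minus_one_nat)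
  have "?sign q = - (\<Sum>s\<in>interval P le p q - {q}. ?sign s)"
    using mobius_rec[OF poset assms] mobius_sign assms
    by (simp add: below_q interval_def)
  moreover have "q \<in> interval P le p q"
    using assms refl_le by (simp add: interval_def)
  ultimately show ?thesis
    by (simp add: sum.remove[OF finite_interval])
qed

lemma eulerian_interval_sum_dual:
  assumes "p \<in> P" "q \<in> P" "le p q" "p \<noteq> q"
  shows "(\<Sum>s\<in>interval P le p q. minus_one_pow (rk q - rk s)) = 0"
proof -
  have "(\<Sum>s\<in>interval P le p q. minus_one_pow (rk q - rk s))
      = minus_one_pow (rk q - rk p) * (\<Sum>s\<in>interval P le p q. minus_one_pow (rk s - rk p))"
    unfolding sum_distrib_left by (intro sum.cong refl) (auto simp: minus_one_pow_def)
  then show ?thesis by (simp add: eulerian_interval_sum[OF assms])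
qed

abbreviation rank_pairs :: "int \<Rightarrow> int \<Rightarrow> ('a \<times> 'a) set" where
  "rank_pairs i j \<equiv> {(p, q). p \<in> P \<and> q \<in> P \<and> le p q \<and> rk p = i \<and> rk q = j}"

lemma rank_eq_imp_eq: "p \<in> P \<Longrightarrow> q \<in> P \<Longrightarrow> le p q \<Longrightarrow> rk p = rk q \<Longrightarrow> p = q"
  using rank_less by (metis less_irrefl)

lemma hat0_unique: "p \<in> P \<Longrightarrow> rk p = -1 \<Longrightarrow> p = hat0"
  using rank_eq_imp_eq[of hat0 p] hat0 rank_hat0 by simp

lemma hat1_unique: "p \<in> P \<Longrightarrow> rk p = d \<Longrightarrow> p = hat1"
  using rank_eq_imp_eq[of p hat1] hat1 rank_hat1 by simp

lemma Npairs_diag: "Npairs P le rk r r = fvec P rk r"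
proof -
  have "rank_pairs r r = (\<lambda>p. (p, p)) ` {p\<in>P. rk p = r}"
    using refl_le rank_eq_imp_eq by (auto simp: image_iff) metis
  then show ?thesis by (simp add: Npairs_def fvec_def card_image inj_on_def)
qed

lemma Npairs_hat0: "Npairs P le rk (-1) r = fvec P rk r"
proof -
  have "rank_pairs (-1) r = (\<lambda>q. (hat0, q)) ` {q\<in>P. rk q = r}"
    using hat0 rank_hat0 by (auto simp: image_iff dest: hat0_unique)
  then show ?thesis by (simp add: Npairs_def fvec_def card_image inj_on_def)
qed

lemma Npairs_hat1: "Npairs P le rk r d = fvec P rk r"
proof -
  have "rank_pairs r d = (\<lambda>p. (p, hat1)) ` {p\<in>P. rk p = r}"
    using hat1 rank_hat1 by (auto simp: image_iff dest: hat1_unique)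
  then show ?thesis by (simp add: Npairs_def fvec_def card_image inj_on_def)
qed

lemma sum_Npairs_column:
  "(\<Sum>k\<in>{-1..m}. c k * int (Npairs P le rk k m))
     = (\<Sum>q\<in>{q\<in>P. rk q = m}. \<Sum>s\<in>interval P le hat0 q. c (rk s))"
proof -
  let ?S = "SIGMA q:{q\<in>P. rk q = m}. interval P le hat0 q"
  have "(\<Sum>q\<in>{q\<in>P. rk q = m}. \<Sum>s\<in>interval P le hat0 q. c (rk s)) = (\<Sum>x\<in>?S. c (rk (snd x)))"
    using sum.Sigma[of _ "interval P le hat0" "\<lambda>_ s. c (rk s)"] finite_carrier finite_interval
    by (simp add: split_def)
  also have "\<dots> = (\<Sum>k\<in>{-1..m}. c k * int (card {x\<in>?S. rk (snd x) = k}))"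
  proof (rule sum_comp_fibres)
    show "(\<lambda>x. rk (snd x)) ` ?S \<subseteq> {-1..m}"
      unfolding interval_def by (auto simp: rank_range rank_mono)
  next
    show "finite ?S" by (simp add: finite_carrier finite_interval)
  qed simp
  also have "\<dots> = (\<Sum>k\<in>{-1..m}. c k * int (Npairs P le rk k m))"
  proof -
    have "rank_pairs k m = prod.swap ` {x\<in>?S. rk (snd x) = k}" for k
      using hat0 unfolding interval_def by (auto simp: image_iff)
    then show ?thesis by (simp add: Npairs_def card_image)
  qed
  finally show ?thesis by (rule sym)
qed

lemma sum_Npairs_row:
  "(\<Sum>k\<in>{i..d}. c k * int (Npairs P le rk i k))
     = (\<Sum>p\<in>{p\<in>P. rk p = i}. \<Sum>s\<in>interval P le p hat1. c (rk s))"
proof -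
  let ?S = "SIGMA p:{p\<in>P. rk p = i}. interval P le p hat1"
  have "(\<Sum>p\<in>{p\<in>P. rk p = i}. \<Sum>s\<in>interval P le p hat1. c (rk s)) = (\<Sum>x\<in>?S. c (rk (snd x)))"
    using sum.Sigma[of _ "\<lambda>p. interval P le p hat1" "\<lambda>_ s. c (rk s)"] finite_carrier finite_interval
    by (simp add: split_def)
  also have "\<dots> = (\<Sum>k\<in>{i..d}. c k * int (card {x\<in>?S. rk (snd x) = k}))"
  proof (rule sum_comp_fibres)
    show "(\<lambda>x. rk (snd x)) ` ?S \<subseteq> {i..d}"
      unfolding interval_def by (auto simp: rank_range rank_mono)
  next
    show "finite ?S" by (simp add: finite_carrier finite_interval)
  qed simp
  also have "\<dots> = (\<Sum>k\<in>{i..d}. c k * int (Npairs P le rk i k))"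
  proof -
    have "rank_pairs i k = {x\<in>?S. rk (snd x) = k}" for k
      using hat1 by (auto simp: interval_def)
    then show ?thesis by (simp add: Npairs_def)
  qed
  finally show ?thesis by (rule sym)
qed

lemma alternating_sum_Npairs_column:
  assumes "0 \<le> m"
  shows "(\<Sum>k\<in>{-1..m}. minus_one_pow (k + 1) * int (Npairs P le rk k m)) = 0"
  unfolding sum_Npairs_column
proof (rule sum.neutral, rule ballI)
  fix q assume q: "q \<in> {q\<in>P. rk q = m}"
  then have "hat0 \<noteq> q" using assms rank_hat0 by auto
  then have "(\<Sum>s\<in>interval P le hat0 q. minus_one_pow (rk s - rk hat0)) = 0"
    using eulerian_interval_sum[of hat0 q] hat0 q by simp
  then show "(\<Sum>s\<in>interval P le hat0 q. minus_one_pow (rk s + 1)) = 0"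
    by (simp add: rank_hat0)
qed

lemma alternating_sum_Npairs_row:
  assumes "i < d"
  shows "(\<Sum>k\<in>{i..d}. minus_one_pow (d - k) * int (Npairs P le rk i k)) = 0"
  unfolding sum_Npairs_row
proof (rule sum.neutral, rule ballI)
  fix p assume p: "p \<in> {p\<in>P. rk p = i}"
  then have "p \<noteq> hat1" using assms rank_hat1 by auto
  then have "(\<Sum>s\<in>interval P le p hat1. minus_one_pow (rk hat1 - rk s)) = 0"
    using eulerian_interval_sum_dual[of p hat1] hat1 p by simp
  then show "(\<Sum>s\<in>interval P le p hat1. minus_one_pow (d - rk s)) = 0"
    by (simp add: rank_hat1)
qed

lemma Npairs_rank_succ:
  assumes "0 \<le> i"
  shows "int (Npairs P le rk i (i + 1)) = ((-1) ^ nat i + 1) * int (fvec P rk (i + 1))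
           + (\<Sum>k\<in>{0..i-1}. (-1) ^ nat (i + 1 - k) * int (Npairs P le rk k (i + 1)))"
proof -
  let ?N = "\<lambda>k. int (Npairs P le rk k (i + 1))" and ?f = "int (fvec P rk (i + 1))"
  let ?s = "minus_one_pow i" and ?X = "\<Sum>k\<in>{0..i-1}. minus_one_pow (k + 1) * ?N k"
  have "{-1..i+1} = insert (-1) (insert (i + 1) (insert i {0..i-1}))"
    using assms by auto
  then have column: "?f + ?s * ?f - ?s * ?N i + ?X = 0"
    using alternating_sum_Npairs_column[of "i + 1"] assms
    by (simp add: Npairs_hat0 Npairs_diag minus_one_pow_add)
  have rest: "(\<Sum>k\<in>{0..i-1}. (-1) ^ nat (i + 1 - k) * ?N k) = ?s * ?X"
    unfolding sum_distrib_left
    by (intro sum.cong refl) (auto simp: power_minus_one_nat minus_one_pow_def)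
  have "?s = 1 \<or> ?s = -1"
    by (simp add: minus_one_pow_def)
  then show ?thesis
    using column rest assms by (auto simp: power_minus_one_nat)
qed

lemma Npairs_0_1: "Npairs P le rk 0 1 = 2 * fvec P rk 1"
  using Npairs_rank_succ[of 0] by simp

lemma Npairs_corank1:
  assumes "i \<le> d - 3"
  shows "int (Npairs P le rk i (d - 1)) = ((-1) ^ nat (d - i) + 1) * int (fvec P rk i)
           + (\<Sum>j\<in>{i+1..d-2}. (-1) ^ nat (d - j) * int (Npairs P le rk i j))"
proof -
  let ?N = "\<lambda>k. int (Npairs P le rk i k)"
  have "{i..d} = insert i (insert d (insert (d - 1) {i+1..d-2}))"
    using assms by auto
  then have "minus_one_pow (d - i) * int (fvec P rk i) + int (fvec P rk i) - ?N (d - 1)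
      + (\<Sum>k\<in>{i+1..d-2}. minus_one_pow (d - k) * ?N k) = 0"
    using alternating_sum_Npairs_row[of i] assms
    by (simp add: Npairs_hat1 Npairs_diag)
  moreover have "(\<Sum>j\<in>{i+1..d-2}. (-1) ^ nat (d - j) * ?N j)
      = (\<Sum>k\<in>{i+1..d-2}. minus_one_pow (d - k) * ?N k)"
    by (intro sum.cong refl) (simp add: power_minus_one_nat)
  ultimately show ?thesis
    using assms by (simp add: power_minus_one_nat distrib_right)
qed

lemma Npairs_corank2_corank1: "Npairs P le rk (d - 2) (d - 1) = 2 * fvec P rk (d - 2)"
proof -
  have "{d-2..d} = {d - 2, d - 1, d}"
    by auto
  then show ?thesis
    using alternating_sum_Npairs_row[of "d - 2"] by (simp add: Npairs_hat1 Npairs_diag)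
qed

lemma sum_rank_pairs_monom:
  "(\<Sum>(p, q)\<in>rank_pairs i j. monom (mobius P le p q) (nat (rk q - rk p)))
     = smult (int (Npairs P le rk i j)) ([:0, -1:] ^ nat (j - i))"
proof -
  have "(\<Sum>(p, q)\<in>rank_pairs i j. monom (mobius P le p q) (nat (rk q - rk p)))
      = (\<Sum>_\<in>rank_pairs i j. monom ((-1) ^ nat (j - i)) (nat (j - i)))"
    by (intro sum.cong refl) (auto simp: mobius_eulerian)
  also have "\<dots> = monom (\<Sum>_\<in>rank_pairs i j. (-1) ^ nat (j - i)) (nat (j - i))"
    by (rule monom_sum[symmetric])
  also have "\<dots> = smult (int (Npairs P le rk i j)) ([:0, -1:] ^ nat (j - i))"
    by (simp add: Npairs_def monom_power_minus_X smult_monom)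
  finally show ?thesis .
qed

lemma mobius_poly_Npairs:
  "mobius_poly P le rk
     = (\<Sum>i\<in>{-1..d}. \<Sum>j\<in>{i..d}. smult (int (Npairs P le rk i j)) ([:0, -1:] ^ nat (j - i)))"
proof -
  let ?A = "{(p, q). p \<in> P \<and> q \<in> P \<and> le p q}" and ?T = "SIGMA i:{-1..d}. {i..d}"
  let ?h = "\<lambda>(p, q). monom (mobius P le p q) (nat (rk q - rk p))"
  let ?ranks = "\<lambda>x. (rk (fst x), rk (snd x))"
  have "finite ?A"
    by (rule finite_subset[of _ "P \<times> P"]) (auto simp: finite_carrier)
  moreover have "?ranks ` ?A \<subseteq> ?T"
    by (auto simp: rank_range rank_mono)
  ultimately have "mobius_poly P le rk = (\<Sum>y\<in>?T. \<Sum>x\<in>{x\<in>?A. ?ranks x = y}. ?h x)"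
    unfolding mobius_poly_def by (intro sum.group[symmetric]) auto
  also have "\<dots> = (\<Sum>(i, j)\<in>?T. smult (int (Npairs P le rk i j)) ([:0, -1:] ^ nat (j - i)))"
  proof (intro sum.cong refl, clarify)
    fix i j
    have "{x\<in>?A. ?ranks x = (i, j)} = rank_pairs i j"
      by auto
    then show "(\<Sum>x\<in>{x\<in>?A. ?ranks x = (i, j)}. ?h x)
        = smult (int (Npairs P le rk i j)) ([:0, -1:] ^ nat (j - i))"
      by (simp add: sum_rank_pairs_monom)
  qed
  also have "\<dots> = (\<Sum>i\<in>{-1..d}. \<Sum>j\<in>{i..d}. smult (int (Npairs P le rk i j)) ([:0, -1:] ^ nat (j - i)))"
    by (simp add: sum.Sigma)
  finally show ?thesis .
qed

end

locale eulerian_poset_pair =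
  P: eulerian_poset P le rk d + Q: eulerian_poset Q leQ rkQ d
  for P :: "'a set" and le rk and Q :: "'b set" and leQ rkQ and d +
  assumes fvec_eq: "\<And>r. fvec Q rkQ r = fvec P rk r"
    and Npairs_interior_eq:
      "\<And>i j. 0 < i + 1 \<Longrightarrow> i + 1 < j \<Longrightarrow> j < d - 1 \<Longrightarrow> Npairs Q leQ rkQ i j = Npairs P le rk i j"
begin

lemma Npairs_rank_succ_eq:
  assumes "0 \<le> i" "i \<le> d - 2"
  shows "Npairs Q leQ rkQ i (i + 1) = Npairs P le rk i (i + 1)"
proof (cases "i = d - 2")
  case True
  then show ?thesis
    using P.Npairs_corank2_corank1 Q.Npairs_corank2_corank1 fvec_eq by simp
next
  case False
  then have "Npairs Q leQ rkQ k (i + 1) = Npairs P le rk k (i + 1)" if "k \<in> {0..i-1}" for k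
    using that assms Npairs_interior_eq by simp
  then show ?thesis
    using P.Npairs_rank_succ[OF assms(1)] Q.Npairs_rank_succ[OF assms(1)] fvec_eq by simp
qed

lemma Npairs_corank1_eq:
  assumes "0 \<le> i" "i \<le> d - 3"
  shows "Npairs Q leQ rkQ i (d - 1) = Npairs P le rk i (d - 1)"
proof -
  have "Npairs Q leQ rkQ i j = Npairs P le rk i j" if "j \<in> {i+1..d-2}" for j
    using that assms Npairs_rank_succ_eq[of i] Npairs_interior_eq[of i j]
    by (cases "j = i + 1") auto
  then show ?thesis
    using P.Npairs_corank1[OF assms(2)] Q.Npairs_corank1[OF assms(2)] fvec_eq by simp
qed

lemma Npairs_eq:
  assumes "-1 \<le> i" "i \<le> j" "j \<le> d"
  shows "Npairs Q leQ rkQ i j = Npairs P le rk i j"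
proof -
  consider "i = j" | "i = -1" | "j = d" | "0 \<le> i" "j = i + 1" "j \<le> d - 1"
    | "0 \<le> i" "i + 1 < j" "j = d - 1" | "0 \<le> i" "i + 1 < j" "j < d - 1"
    using assms by linarith
  then show ?thesis
  proof cases
    case 1
    then show ?thesis using P.Npairs_diag Q.Npairs_diag fvec_eq by simp
  next
    case 2
    then show ?thesis using P.Npairs_hat0 Q.Npairs_hat0 fvec_eq by simp
  next
    case 3
    then show ?thesis using P.Npairs_hat1 Q.Npairs_hat1 fvec_eq by simp
  next
    case 4
    then show ?thesis using Npairs_rank_succ_eq[of i] by simp
  next
    case 5
    then show ?thesis using Npairs_corank1_eq[of i] by simp
  next
    case 6
    then show ?thesis using Npairs_interior_eq by simp
  qed
qed

lemma mobius_poly_eq: "mobius_poly Q leQ rkQ = mobius_poly P le rk"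
  unfolding P.mobius_poly_Npairs Q.mobius_poly_Npairs
  by (intro sum.cong refl) (simp add: Npairs_eq)

end

theorem mainTheorem18:
  fixes P :: "'a set" and le :: "'a \<Rightarrow> 'a \<Rightarrow> bool" and rk :: "'a \<Rightarrow> int" and d :: int
  assumes eul: "eulerian P le rk"
    and rank_d: "d \<in> rk ` P" "\<forall>p\<in>P. rk p \<le> d"
    and d3: "d \<ge> 3"
  defines "f \<equiv> fvec P rk" and "N \<equiv> Npairs P le rk"
  shows "mobius_poly P le rk =
           (\<Sum>i\<in>{-1..d}. \<Sum>j\<in>{i..d}. smult (int (N i j)) ([:0, -1:] ^ nat (j - i)))
    \<and> (\<forall>r\<in>{-1..d}. N r r = f r \<and> N (-1) r = f r \<and> N r d = f r)
    \<and> (N 0 1 = 2 * f 1)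
    \<and> (\<forall>i\<in>{1..d-3}. int (N i (i+1)) =
           ((-1) ^ nat i + 1) * int (f (i+1))
           + (\<Sum>k\<in>{0..i-1}. (-1) ^ nat (i + 1 - k) * int (N k (i+1))))
    \<and> (N (d-2) (d-1) = 2 * f (d-2))
    \<and> (\<forall>i\<in>{0..d-3}. int (N i (d-1)) =
           ((-1) ^ nat (d - i) + 1) * int (f i)
           + (\<Sum>j\<in>{i+1..d-2}. (-1) ^ nat (d - j) * int (N i j)))
    \<and> (\<forall>(Q :: 'b set) leQ rkQ. eulerian Q leQ rkQ \<and> d \<in> rkQ ` Q \<and> (\<forall>q\<in>Q. rkQ q \<le> d)
           \<and> (\<forall>r. fvec Q rkQ r = f r)
           \<and> (\<forall>i j. 0 < i + 1 \<and> i + 1 < j \<and> j < d - 1 \<longrightarrow> Npairs Q leQ rkQ i j = N i j)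
           \<longrightarrow> mobius_poly Q leQ rkQ = mobius_poly P le rk)"
proof -
  interpret eulerian_poset P le rk d
    using eul rank_d by unfold_locales
  have determined: "mobius_poly Q leQ rkQ = mobius_poly P le rk"
    if "eulerian Q leQ rkQ \<and> d \<in> rkQ ` Q \<and> (\<forall>q\<in>Q. rkQ q \<le> d) \<and> (\<forall>r. fvec Q rkQ r = f r)
        \<and> (\<forall>i j. 0 < i + 1 \<and> i + 1 < j \<and> j < d - 1 \<longrightarrow> Npairs Q leQ rkQ i j = N i j)"
    for Q :: "'b set" and leQ rkQ
  proof -
    interpret eulerian_poset_pair P le rk Q leQ rkQ d
      using that eul rank_d unfolding f_def N_def by unfold_locales auto
    show ?thesis by (rule mobius_poly_eq)
  qed
  show ?thesis
    unfolding f_def N_def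
    using mobius_poly_Npairs Npairs_diag Npairs_hat0 Npairs_hat1 Npairs_0_1 Npairs_rank_succ
      Npairs_corank2_corank1 Npairs_corank1 determined[unfolded f_def N_def]
    by auto
qed

end
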